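(* Let $f$ be a $2\pi$-periodic continuous function with modulus of continuity $\omega(\delta)=\omega(\delta,f)$. Suppose there is a function $H(u)\ge 0$ such that \[ \int_u^{\pi} t^{-2}\omega(t)\,dt=\mathcal{O}\big(H(u)\big)\quad (u\to+0) \qquad\text{and}\qquad \int_0^{t}H(u)\,du=\mathcal{O}\big(tH(t)\big)\quad (t\to+0). \] Then, for positive integers $m$, \[ \int_0^{\pi/m}\omega(t)\,dt=\mathcal{O}\big(m^{-2}H(\pi/m)\big). \]
   Context: $\omega(\delta,f)=\sup_{|h|\le\delta}\sup_x|f(x+h)-f(x)|$ is the modulus of continuity of $f$. The notation $u=\mathcal{O}(v)$ means $u\le Cv$ for some positive constant $C$. *)

theory Defs
  imports "HOL-Analysis.Analysis" "HOL-Library.Landau_Symbols"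
begin

definition modulus_of_continuity :: "(real \<Rightarrow> real) \<Rightarrow> real \<Rightarrow> real" where
  "modulus_of_continuity f \<delta> = (SUP p \<in> {(x, h). \<bar>h\<bar> \<le> \<delta>}. \<bar>f (fst p + snd p) - f (fst p)\<bar>)"

end

(* Since the modulus of continuity \<omega> is nondecreasing,
     \<omega>(u) \<le> 4u \<integral>[u,2u] \<omega>(t) t^-2 dt \<le> 4u \<integral>[u,\<pi>] \<omega>(t) t^-2 dt,
   so the first hypothesis gives \<omega>(u) = O(u H(u)) as u \<rightarrow> 0+. Integrating over [0,\<delta>]
   yields \<integral>[0,\<delta>] \<omega> = O(\<delta> \<integral>[0,\<delta>] H), which is O(\<delta>^2 H(\<delta>)) by the second
   hypothesis; finally substitute \<delta> = \<pi>/m. *)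
theory Submission
  imports Defs "HOL-Library.Periodic_Fun" "HOL-Real_Asymp.Real_Asymp"
begin

lemma periodic_continuous_bounded:
  fixes f :: "real \<Rightarrow> 'a::real_normed_vector"
  assumes cont: "continuous_on UNIV f" and periodic: "\<And>x. f (x + p) = f x" and "0 < p"
  shows "bounded (range f)"
proof -
  interpret periodic_fun_simple f p
    by unfold_locales (rule periodic)
  have "range f \<subseteq> f ` {0..p}"
  proof
    fix y assume "y \<in> range f"
    then obtain x where y: "y = f x" by blast
    define k where "k = \<lfloor>x / p\<rfloor>"
    have "of_int k * p \<le> x" "x \<le> (of_int k + 1) * p"
      using \<open>0 < p\<close> floor_divide_lower[of p x] floor_divide_upper[of p x] unfolding k_def
      by (auto simp: algebra_simps)
    then have "x - of_int k * p \<in> {0..p}" by (auto simp: algebra_simps)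
    moreover have "y = f (x - of_int k * p)" using y minus_of_int[of x k] by simp
    ultimately show "y \<in> f ` {0..p}" by blast
  qed
  moreover have "bounded (f ` {0..p})"
    by (intro compact_imp_bounded compact_continuous_image continuous_on_subset[OF cont]) auto
  ultimately show ?thesis by (metis bounded_subset)
qed

lemma bdd_above_modulus_of_continuity:
  fixes f :: "real \<Rightarrow> real"
  assumes "bounded (range f)"
  shows "bdd_above ((\<lambda>p. \<bar>f (fst p + snd p) - f (fst p)\<bar>) ` A)"
proof -
  obtain M where M: "\<And>x. \<bar>f x\<bar> \<le> M"
    using assms by (auto simp: bounded_iff)
  have "\<bar>f (x + h) - f x\<bar> \<le> 2 * M" for x h
    using M[of "x + h"] M[of x] by linarith
  then show ?thesis by (intro bdd_aboveI2[where M = "2 * M"]) simp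
qed

lemma modulus_of_continuity_nonneg:
  assumes "bounded (range f)" "0 \<le> \<delta>"
  shows "0 \<le> modulus_of_continuity f \<delta>"
proof -
  have "(0, 0) \<in> {(x, h). \<bar>h\<bar> \<le> \<delta>}" using assms(2) by simp
  from cSUP_upper[OF this bdd_above_modulus_of_continuity[OF assms(1)]]
  show ?thesis by (simp add: modulus_of_continuity_def)
qed

lemma mono_on_modulus_of_continuity:
  assumes "bounded (range f)"
  shows "mono_on {0..} (modulus_of_continuity f)"
  unfolding modulus_of_continuity_def
  by (intro mono_onI cSUP_subset_mono[OF _ bdd_above_modulus_of_continuity[OF assms]])
     (auto intro: exI[of _ 0])

lemma mono_on_divide_square_integrable:
  fixes w :: "real \<Rightarrow> real"
  assumes mono: "mono_on {a..b} w" and "0 < a"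
  shows "(\<lambda>t. w t / t\<^sup>2) integrable_on {a..b}"
proof -
  have "(\<lambda>t. w t * inverse (t\<^sup>2)) absolutely_integrable_on {a..b}"
  proof (rule absolutely_integrable_bounded_measurable_product_real)
    show "w \<in> borel_measurable (lebesgue_on {a..b})"
      by (rule integrable_imp_measurable[OF integrable_on_mono_on[OF mono]])
    have "w ` {a..b} \<subseteq> {w a..w b}"
      by (auto intro!: mono_onD[OF mono])
    then show "bounded (w ` {a..b})"
      by (metis bounded_closed_interval bounded_subset)
    show "(\<lambda>t. inverse (t\<^sup>2)) absolutely_integrable_on {a..b}"
      by (intro absolutely_integrable_continuous_real continuous_intros) (use \<open>0 < a\<close> in auto)
  qed simp
  then show ?thesis
    by (simp add: absolutely_integrable_on_def divide_inverse)
qed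

lemma mono_le_integral_divide_square:
  fixes w :: "real \<Rightarrow> real"
  assumes mono: "mono_on {u..b} w" and nonneg: "\<And>t. t \<in> {u..b} \<Longrightarrow> 0 \<le> w t"
    and "0 < u" "2 * u \<le> b"
  shows "w u \<le> 4 * u * integral {u..b} (\<lambda>t. w t / t\<^sup>2)"
proof -
  let ?G = "\<lambda>t. w t / t\<^sup>2"
  have sub: "{u..2 * u} \<subseteq> {u..b}" using \<open>2 * u \<le> b\<close> by auto
  have G: "?G integrable_on {u..b}"
    by (rule mono_on_divide_square_integrable[OF mono \<open>0 < u\<close>])
  have "w u / (4 * u) = integral {u..2 * u} (\<lambda>t. w u / (2 * u)\<^sup>2)"
    using \<open>0 < u\<close> by (simp add: power2_eq_square field_simps)
  also have "\<dots> \<le> integral {u..2 * u} ?G"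
  proof (rule integral_le)
    show "?G integrable_on {u..2 * u}" by (rule integrable_on_subinterval[OF G sub])
    fix t assume t: "t \<in> {u..2 * u}"
    with sub \<open>0 < u\<close> have "0 \<le> w t" "w u \<le> w t" "0 < t\<^sup>2"
      by (auto intro: mono_onD[OF mono] nonneg)
    moreover have "t\<^sup>2 \<le> (2 * u)\<^sup>2"
      by (rule power_mono) (use t \<open>0 < u\<close> in auto)
    ultimately show "w u / (2 * u)\<^sup>2 \<le> w t / t\<^sup>2" by (rule frac_le)
  qed (rule integrable_const_ivl)
  also have "\<dots> \<le> integral {u..b} ?G"
    by (rule integral_subset_le[OF sub integrable_on_subinterval[OF G sub] G])
       (use \<open>0 < u\<close> in \<open>auto intro!: divide_nonneg_nonneg nonneg\<close>)
  finally show ?thesis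
    using \<open>0 < u\<close> by (simp add: field_simps)
qed

lemma modulus_of_continuity_bigo_integral:
  assumes bounded: "bounded (range f)" and "0 < b"
  defines "\<omega> \<equiv> modulus_of_continuity f"
  shows "\<omega> \<in> O[at_right 0](\<lambda>u. u * integral {u..b} (\<lambda>t. \<omega> t / t\<^sup>2))"
proof (rule landau_o.bigI[of 4])
  have "\<forall>\<^sub>F u in at_right 0. u < b / 2"
    using \<open>0 < b\<close> by (auto simp: eventually_at_right_field intro: exI[of _ "b / 2"])
  with eventually_at_right_less[of 0]
  show "\<forall>\<^sub>F u in at_right 0. norm (\<omega> u) \<le> 4 * norm (u * integral {u..b} (\<lambda>t. \<omega> t / t\<^sup>2))"
  proof eventually_elim
    case (elim u)
    have "\<omega> u \<le> 4 * u * integral {u..b} (\<lambda>t. \<omega> t / t\<^sup>2)"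
      unfolding \<omega>_def
      by (rule mono_le_integral_divide_square[OF mono_on_subset[OF mono_on_modulus_of_continuity]])
         (use elim bounded in \<open>auto intro: modulus_of_continuity_nonneg\<close>)
    with elim modulus_of_continuity_nonneg[OF bounded, of u] show ?case
      unfolding \<omega>_def by auto
  qed
qed simp

lemma integral_norm_bound_integral_spike:
  fixes f :: "'n::euclidean_space \<Rightarrow> 'a::banach"
  assumes f: "f integrable_on S" and g: "g integrable_on S" and N: "negligible N"
    and le_g: "\<And>x. x \<in> S - N \<Longrightarrow> norm (f x) \<le> g x"
  shows "norm (integral S f) \<le> integral S g"
proof -
  define g' where "g' x = (if x \<in> N then norm (f x) else g x)" for x
  have "integral S g = integral S g'"
    by (rule integral_spike[OF N]) (simp add: g'_def)
  moreover have "norm (integral S f) \<le> integral S g'"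
    by (rule integral_norm_bound_integral[OF f integrable_spike[OF g N]]) (auto simp: g'_def le_g)
  ultimately show ?thesis by simp
qed

lemma integral_bigo_at_right_0:
  fixes w H :: "real \<Rightarrow> real"
  assumes bigo: "w \<in> O[at_right 0](\<lambda>u. u * H u)"
    and H_nonneg: "\<forall>\<^sub>F u in at_right 0. 0 \<le> H u"
    and integrable: "\<forall>\<^sub>F d in at_right 0. w integrable_on {0..d} \<and> H integrable_on {0..d}"
  shows "(\<lambda>d. integral {0..d} w) \<in> O[at_right 0](\<lambda>d. d * integral {0..d} H)"
proof -
  from bigo obtain c where c: "c > 0"
    and w_le: "\<forall>\<^sub>F u in at_right 0. norm (w u) \<le> c * norm (u * H u)"
    by (elim landau_o.bigE)
  from w_le H_nonneg eventually_at_right_less[of 0]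
  have "\<forall>\<^sub>F u in at_right 0. \<bar>w u\<bar> \<le> c * u * H u \<and> 0 \<le> H u"
    by eventually_elim (auto simp: abs_mult)
  then obtain e where "e > 0"
    and bound: "\<And>u. 0 < u \<Longrightarrow> u < e \<Longrightarrow> \<bar>w u\<bar> \<le> c * u * H u \<and> 0 \<le> H u"
    unfolding eventually_at_right_field by auto
  have "\<forall>\<^sub>F d in at_right 0. d < e"
    using \<open>e > 0\<close> by (auto simp: eventually_at_right_field)
  with integrable
  have "\<forall>\<^sub>F d in at_right 0. norm (integral {0..d} w) \<le> c * norm (d * integral {0..d} H)"
  proof eventually_elim
    case (elim d)
    have "norm (integral {0..d} w) \<le> integral {0..d} (\<lambda>u. c * d * H u)"
    proof (rule integral_norm_bound_integral_spike[where N = "{0}"])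
      fix u assume "u \<in> {0..d} - {0}"
      with elim bound[of u] have w_u: "\<bar>w u\<bar> \<le> c * u * H u" and "0 \<le> H u" "u \<le> d"
        by auto
      with \<open>c > 0\<close> have "c * u * H u \<le> c * d * H u"
        by (intro mult_right_mono mult_left_mono) auto
      with w_u show "norm (w u) \<le> c * d * H u" by simp
    qed (use elim integrable_on_cmult_left[of H "{0..d}" "c * d"] in auto)
    also have "\<dots> = c * (d * integral {0..d} H)" by simp
    also have "\<dots> \<le> c * norm (d * integral {0..d} H)"
      using \<open>c > 0\<close> by (intro mult_left_mono) auto
    finally show ?case .
  qed
  then show ?thesis by (intro landau_o.bigI[OF c])
qed

theorem lemma2p2:
  fixes f H :: "real \<Rightarrow> real"
  assumes cont: "continuous_on UNIV f"
    and periodic: "\<And>x. f (x + 2 * pi) = f x"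
    and H_nonneg: "\<And>u. u > 0 \<Longrightarrow> H u \<ge> 0"
    and hyp1: "(\<lambda>u. integral {u..pi} (\<lambda>t. modulus_of_continuity f t / t\<^sup>2)) \<in> O[at_right 0](H)"
    and H_int: "\<forall>\<^sub>F t in at_right 0. H integrable_on {0..t}"
    and hyp2: "(\<lambda>t. integral {0..t} H) \<in> O[at_right 0](\<lambda>t. t * H t)"
  shows "(\<lambda>m::nat. integral {0..pi / real m} (modulus_of_continuity f))
           \<in> O(\<lambda>m. H (pi / real m) / (real m)\<^sup>2)"
proof -
  define \<omega> where "\<omega> = modulus_of_continuity f"
  have bounded: "bounded (range f)"
    using periodic_continuous_bounded[OF cont periodic] by simp
  have \<omega>_integrable: "\<omega> integrable_on {0..d}" for d
    unfolding \<omega>_def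
    by (rule integrable_on_mono_on mono_on_subset[OF mono_on_modulus_of_continuity[OF bounded]])+
       auto
  have "\<omega> \<in> O[at_right 0](\<lambda>u. u * integral {u..pi} (\<lambda>t. \<omega> t / t\<^sup>2))"
    unfolding \<omega>_def by (rule modulus_of_continuity_bigo_integral[OF bounded pi_gt_zero])
  also have "(\<lambda>u. u * integral {u..pi} (\<lambda>t. \<omega> t / t\<^sup>2)) \<in> O[at_right 0](\<lambda>u. u * H u)"
    using hyp1 unfolding \<omega>_def by (rule landau_o.big.mult_left)
  finally have "(\<lambda>d. integral {0..d} \<omega>) \<in> O[at_right 0](\<lambda>d. d * integral {0..d} H)"
    by (rule integral_bigo_at_right_0)
       (use H_nonneg H_int eventually_at_right_less[of 0] \<omega>_integrable in \<open>auto elim: eventually_mono\<close>)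
  also have "(\<lambda>d. d * integral {0..d} H) \<in> O[at_right 0](\<lambda>d. d * (d * H d))"
    using hyp2 by (rule landau_o.big.mult_left)
  finally have "(\<lambda>m::nat. integral {0..pi / real m} \<omega>)
      \<in> O(\<lambda>m. pi / real m * (pi / real m * H (pi / real m)))"
    by (rule landau_o.big.compose) real_asymp
  also have "(\<lambda>m::nat. pi / real m * (pi / real m * H (pi / real m)))
      = (\<lambda>m. pi\<^sup>2 * (H (pi / real m) / (real m)\<^sup>2))"
    by (simp add: power2_eq_square mult.assoc)
  finally show ?thesis
    unfolding \<omega>_def by (simp del: times_divide_eq_right)
qed

end
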